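(* Let $T\ge1$, $R\ge 1$, let $\kappa_1,\dots,\kappa_R\ge 0$, let $0<\omega_1\le\cdots\le\omega_R$, and let $d_1,\dots,d_T\ge 0$ be real numbers. For $\theta\ge 0$ define $$\tilde Z_j(\theta)=\sum_{r=1}^R\kappa_r\cos(\omega_r\theta d_j),\qquad \tilde A_j(\theta)=\frac{\exp(\tilde Z_j(\theta))}{\sum_{j'=1}^T\exp(\tilde Z_{j'}(\theta))},\quad j\in[T].$$ Let $S\subseteq[T]$, $F=[T]\setminus S$, assume $d_i\le d_j$ for all $i\in S$, $j\in F$, and let $M_S(\theta)=\sum_{i\in S}\tilde A_i(\theta)$. Let $d_{\max}=\max_j d_j$ and $\omega_{\max}=\max_r\omega_r=\omega_R$. Then for every $\theta$ with $0\le \theta\le \pi/(2\omega_{\max}d_{\max})$ (any $\theta\ge0$ if $d_{\max}=0$), $$\frac{d}{d\theta}M_S(\theta)\ge 0.$$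
   Context: $[T]=\{1,\dots,T\}$. This is a reduced-form (coherent-band) model of rotary positional encoding (RoPE) in one cross-attention row: $d_j=\tilde l-j$ is the relative distance of history position $j$ from the current decoder position, $\theta$ is the overall rotary scale, and $S$ is the set of "near" positions. *)

theory Defs
  imports "HOL-Analysis.Analysis"
begin

definition Ztil :: "nat \<Rightarrow> (nat \<Rightarrow> real) \<Rightarrow> (nat \<Rightarrow> real) \<Rightarrow> (nat \<Rightarrow> real) \<Rightarrow> nat \<Rightarrow> real \<Rightarrow> real" where
  "Ztil R \<kappa> \<omega> d j \<theta> = (\<Sum>r=1..R. \<kappa> r * cos (\<omega> r * \<theta> * d j))"

definition Atil :: "nat \<Rightarrow> nat \<Rightarrow> (nat \<Rightarrow> real) \<Rightarrow> (nat \<Rightarrow> real) \<Rightarrow> (nat \<Rightarrow> real) \<Rightarrow> nat \<Rightarrow> real \<Rightarrow> real" where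
  "Atil T R \<kappa> \<omega> d j \<theta> =
     exp (Ztil R \<kappa> \<omega> d j \<theta>) / (\<Sum>j'=1..T. exp (Ztil R \<kappa> \<omega> d j' \<theta>))"

definition MS :: "nat \<Rightarrow> nat \<Rightarrow> (nat \<Rightarrow> real) \<Rightarrow> (nat \<Rightarrow> real) \<Rightarrow> (nat \<Rightarrow> real) \<Rightarrow> nat set \<Rightarrow> real \<Rightarrow> real" where
  "MS T R \<kappa> \<omega> d S \<theta> = (\<Sum>i\<in>S. Atil T R \<kappa> \<omega> d i \<theta>)"

end

theory Submission
  imports Defs
begin

(* M_S is the mass that a softmax puts on S, so its derivative is a positive multiple of
   sum_{i in S, j in F} A_i A_j (Z_i' - Z_j').  Every logit derivative has the form
   Z_j' = - sum_r kappa_r omega_r d_j sin(omega_r theta d_j), and x sin(c x) is nondecreasing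
   on [0, pi/(2c)]; below the angle bound, nearer positions therefore lose logit more slowly
   and each summand is nonnegative. *)

lemma mult_sin_mult_mono:
  fixes a b c :: real
  assumes "0 \<le> a" "a \<le> b" "0 \<le> c" "c * b \<le> pi / 2"
  shows "a * sin (c * a) \<le> b * sin (c * b)"
proof -
  have ca_cb: "c * a \<le> c * b" using assms by (simp add: mult_left_mono)
  have "0 \<le> c * a" using assms by simp
  have "sin (c * a) \<le> sin (c * b)"
    using assms ca_cb \<open>0 \<le> c * a\<close> pi_gt_zero by (intro sin_monotone_2pi_le) linarith+
  moreover have "0 \<le> sin (c * a)"
    using assms ca_cb \<open>0 \<le> c * a\<close> pi_gt_zero by (intro sin_ge_zero) linarith+
  ultimately show ?thesis using assms by (intro mult_mono) auto
qed

lemma phase_le_pi_half: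
  fixes w W x X \<theta> :: real
  assumes "0 \<le> w" "w \<le> W" "0 \<le> x" "x \<le> X" "0 \<le> \<theta>"
    and "X \<noteq> 0 \<Longrightarrow> \<theta> \<le> pi / (2 * W * X)"
  shows "w * \<theta> * x \<le> pi / 2"
proof (cases "W * X = 0")
  case True
  then have "w * x = 0" using assms by (auto simp: mult_le_0_iff)
  then have "w * \<theta> * x = 0" by (simp add: ac_simps)
  then show ?thesis using pi_gt_zero by linarith
next
  case False
  then have "0 < W * X" "X \<noteq> 0" using assms by (auto simp: less_le)
  then have "\<theta> * (2 * (W * X)) \<le> pi"
    using assms(6) by (simp add: pos_le_divide_eq mult.assoc)
  moreover have "w * \<theta> * x \<le> W * \<theta> * X"
    using assms by (intro mult_mono) (auto intro: mult_right_mono)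
  ultimately show ?thesis by (simp add: algebra_simps)
qed

lemma softmax_mass_has_real_derivative:
  fixes z :: "'i \<Rightarrow> real \<Rightarrow> real"
  assumes "finite I" "I \<noteq> {}" "S \<subseteq> I"
    and z_deriv: "\<And>j. j \<in> I \<Longrightarrow> (z j has_real_derivative z' j) (at \<theta> within A)"
  shows "((\<lambda>t. (\<Sum>i\<in>S. exp (z i t)) / (\<Sum>j\<in>I. exp (z j t))) has_real_derivative
      (\<Sum>i\<in>S. \<Sum>j\<in>I - S. exp (z i \<theta>) * exp (z j \<theta>) * (z' i - z' j))
        / (\<Sum>j\<in>I. exp (z j \<theta>))\<^sup>2) (at \<theta> within A)"
proof -
  define e where "e j = exp (z j \<theta>)" for j
  have exp_deriv: "((\<lambda>t. exp (z j t)) has_real_derivative e j * z' j) (at \<theta> within A)"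
    if "j \<in> I" for j
    unfolding e_def using z_deriv[OF that] by (auto intro!: derivative_eq_intros)
  have exp_sum_deriv:
    "((\<lambda>t. \<Sum>j\<in>J. exp (z j t)) has_real_derivative (\<Sum>j\<in>J. e j * z' j)) (at \<theta> within A)"
    if "J \<subseteq> I" for J
    using that exp_deriv by (auto intro!: DERIV_sum)
  have "(\<Sum>j\<in>I. e j) > 0"
    using assms(1,2) by (intro sum_pos) (auto simp: e_def)
  have sum_split: "(\<Sum>j\<in>I. f j) = (\<Sum>j\<in>I - S. f j) + (\<Sum>i\<in>S. f i)" for f :: "'i \<Rightarrow> real"
    using assms(3,1) by (rule sum.subset_diff)
  have "(\<Sum>i\<in>S. e i * z' i) * (\<Sum>j\<in>I. e j) - (\<Sum>j\<in>I. e j * z' j) * (\<Sum>i\<in>S. e i)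
      = (\<Sum>i\<in>S. e i * z' i) * (\<Sum>j\<in>I - S. e j) - (\<Sum>j\<in>I - S. e j * z' j) * (\<Sum>i\<in>S. e i)"
    by (simp only: sum_split) (simp add: algebra_simps)
  also have "\<dots> = (\<Sum>i\<in>S. \<Sum>j\<in>I - S. e i * e j * (z' i - z' j))"
    by (simp add: sum_product sum.swap[of _ "I - S"] sum_subtractf[symmetric] algebra_simps)
  finally show ?thesis
    using DERIV_quotient[OF exp_sum_deriv[OF \<open>S \<subseteq> I\<close>] exp_sum_deriv[OF order_refl]]
      \<open>(\<Sum>j\<in>I. e j) > 0\<close>
    by (simp add: e_def power2_eq_square)
qed

definition Ztil_deriv :: "nat \<Rightarrow> (nat \<Rightarrow> real) \<Rightarrow> (nat \<Rightarrow> real) \<Rightarrow> (nat \<Rightarrow> real) \<Rightarrow> nat \<Rightarrow> real \<Rightarrow> real" where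
  "Ztil_deriv R \<kappa> \<omega> d j \<theta> = - (\<Sum>r=1..R. \<kappa> r * \<omega> r * d j * sin (\<omega> r * \<theta> * d j))"

lemma Ztil_has_real_derivative:
  "(Ztil R \<kappa> \<omega> d j has_real_derivative Ztil_deriv R \<kappa> \<omega> d j \<theta>) (at \<theta> within A)"
proof -
  have "(Ztil R \<kappa> \<omega> d j has_real_derivative
      (\<Sum>r=1..R. \<kappa> r * (- sin (\<omega> r * \<theta> * d j) * (\<omega> r * d j)))) (at \<theta> within A)"
    unfolding Ztil_def[abs_def] by (auto intro!: derivative_eq_intros sum.cong simp: algebra_simps)
  then show ?thesis
    unfolding Ztil_deriv_def by (simp add: sum_negf[symmetric] algebra_simps)
qed

lemma Ztil_deriv_antimono:
  assumes "\<And>r. r \<in> {1..R} \<Longrightarrow> 0 \<le> \<kappa> r \<and> 0 \<le> \<omega> r \<and> \<omega> r * \<theta> * d j \<le> pi / 2"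
    and "0 \<le> \<theta>" "0 \<le> d i" "d i \<le> d j"
  shows "Ztil_deriv R \<kappa> \<omega> d j \<theta> \<le> Ztil_deriv R \<kappa> \<omega> d i \<theta>"
proof -
  have "\<kappa> r * \<omega> r * (d i * sin (\<omega> r * \<theta> * d i)) \<le> \<kappa> r * \<omega> r * (d j * sin (\<omega> r * \<theta> * d j))"
    if "r \<in> {1..R}" for r
    using assms(1)[OF that] assms(2-4) mult_sin_mult_mono[of "d i" "d j" "\<omega> r * \<theta>"]
    by (intro mult_left_mono) auto
  then show ?thesis
    unfolding Ztil_deriv_def by (auto intro: sum_mono simp: mult.assoc)
qed

theorem mainTheorem2:
  fixes T R :: nat and \<kappa> \<omega> d :: "nat \<Rightarrow> real" and S :: "nat set" and \<theta> :: real
  assumes T1: "T \<ge> 1" and R1: "R \<ge> 1"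
    and kappa_nonneg: "\<And>r. r \<in> {1..R} \<Longrightarrow> \<kappa> r \<ge> 0"
    and omega_pos: "\<omega> 1 > 0"
    and omega_mono: "\<And>r r'. 1 \<le> r \<Longrightarrow> r \<le> r' \<Longrightarrow> r' \<le> R \<Longrightarrow> \<omega> r \<le> \<omega> r'"
    and d_nonneg: "\<And>j. j \<in> {1..T} \<Longrightarrow> d j \<ge> 0"
    and S_sub: "S \<subseteq> {1..T}"
    and near: "\<And>i j. i \<in> S \<Longrightarrow> j \<in> {1..T} - S \<Longrightarrow> d i \<le> d j"
    and theta_nonneg: "0 \<le> \<theta>"
    and theta_le: "Max (d ` {1..T}) \<noteq> 0 \<Longrightarrow> \<theta> \<le> pi / (2 * \<omega> R * Max (d ` {1..T}))"
  shows "\<exists>D. ((\<lambda>t. MS T R \<kappa> \<omega> d S t) has_real_derivative D) (at \<theta>) \<and> D \<ge> 0"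
proof -
  let ?z = "Ztil R \<kappa> \<omega> d" and ?z' = "\<lambda>j. Ztil_deriv R \<kappa> \<omega> d j \<theta>"
  have MS_eq: "MS T R \<kappa> \<omega> d S t = (\<Sum>i\<in>S. exp (?z i t)) / (\<Sum>j\<in>{1..T}. exp (?z j t))" for t
    unfolding MS_def Atil_def by (simp add: sum_divide_distrib)
  have phase: "0 \<le> \<omega> r \<and> \<omega> r * \<theta> * d j \<le> pi / 2" if "r \<in> {1..R}" "j \<in> {1..T}" for r j
    using that omega_pos omega_mono[of 1 r] omega_mono[of r R] d_nonneg[of j] theta_nonneg theta_le
    by (intro conjI phase_le_pi_half[where X = "Max (d ` {1..T})"]) auto
  have "?z' j \<le> ?z' i" if "i \<in> S" "j \<in> {1..T} - S" for i j
    using that S_sub kappa_nonneg phase d_nonneg near theta_nonneg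
    by (intro Ztil_deriv_antimono) auto
  then have "0 \<le> (\<Sum>i\<in>S. \<Sum>j\<in>{1..T} - S. exp (?z i \<theta>) * exp (?z j \<theta>) * (?z' i - ?z' j))
      / (\<Sum>j\<in>{1..T}. exp (?z j \<theta>))\<^sup>2"
    by (intro divide_nonneg_nonneg sum_nonneg) auto
  moreover have "((\<lambda>t. MS T R \<kappa> \<omega> d S t) has_real_derivative
      (\<Sum>i\<in>S. \<Sum>j\<in>{1..T} - S. exp (?z i \<theta>) * exp (?z j \<theta>) * (?z' i - ?z' j))
        / (\<Sum>j\<in>{1..T}. exp (?z j \<theta>))\<^sup>2) (at \<theta>)"
    unfolding MS_eq using T1 S_sub
    by (intro softmax_mass_has_real_derivative Ztil_has_real_derivative) auto
  ultimately show ?thesis by blast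
qed

end
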